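(* Let $n\ge 1$. For $i,j\in\{1,\dots,n\}$ let $L_i>0$, $\mu_i>0$, $\theta_i\ge 0$ and $\gamma_{ij}\ge 0$ be real numbers with $\gamma_{ii}=0$ and $\gamma_{ij}=\gamma_{ji}$ for all $i,j$. Let $A$ be the $n\times n$ real matrix with entries $$A_{ii}=-\Big(\frac{\mu_i}{L_i}+\theta_i+\sum_{j=1}^n\frac{\gamma_{ij}}{L_i}\Big),\qquad A_{ij}=\frac{\gamma_{ij}}{L_j}\quad (i\neq j).$$ Then every eigenvalue of $A$ has negative real part.
   Context: This matrix is the coefficient matrix of the linear inventory model $y'(t)=Ay(t)+b$ for $n$ warehouses in one echelon, where $L_i$ is the maximum inventory level of warehouse $i$, $\mu_i$ its maximum supply rate, $\theta_i$ its deterioration percentage per unit time, and $\gamma_{ij}$ the maximum lateral transshipment rate from warehouse $i$ to warehouse $j$. *)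

theory Defs
  imports "Jordan_Normal_Form.Char_Poly"
begin

definition inv_matrix :: "nat \<Rightarrow> (nat \<Rightarrow> real) \<Rightarrow> (nat \<Rightarrow> real) \<Rightarrow> (nat \<Rightarrow> real)
    \<Rightarrow> (nat \<Rightarrow> nat \<Rightarrow> real) \<Rightarrow> real mat" where
  "inv_matrix n L \<mu> \<theta> \<gamma> = mat n n (\<lambda>(i,j).
     if i = j then - (\<mu> i / L i + \<theta> i + (\<Sum>k<n. \<gamma> i k / L i))
     else \<gamma> i j / L j)"

end

theory Submission
  imports Defs
begin

text \<open>
  Scaling the unknowns by the maximal inventory levels, \<open>v\<^sub>j = L\<^sub>j u\<^sub>j\<close>, turns the
  coefficient matrix into \<open>A\<^sub>i\<^sub>j L\<^sub>j\<close>, whose off-diagonal row sums \<open>\<Sum>\<^sub>j \<gamma>\<^sub>i\<^sub>j\<close> are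
  exceeded by the diagonal \<open>\<mu>\<^sub>i + \<theta>\<^sub>i L\<^sub>i + \<Sum>\<^sub>j \<gamma>\<^sub>i\<^sub>j\<close> since \<open>\<mu>\<^sub>i > 0\<close>. A
  Gershgorin argument at an index maximising \<open>|u\<^sub>i|\<close> then confines every
  eigenvalue to the open left half-plane.
\<close>

lemma eigenvalue_weighted_gershgorin:
  fixes M :: "complex mat" and d :: "nat \<Rightarrow> real"
  assumes M: "M \<in> carrier_mat n n"
    and d: "\<And>i. i < n \<Longrightarrow> d i > 0"
    and "eigenvalue M z"
  obtains i where "i < n"
    "cmod (z - M $$ (i, i)) * d i \<le> (\<Sum>j\<in>{..<n} - {i}. cmod (M $$ (i, j)) * d j)"
proof -
  obtain v where v: "v \<in> carrier_vec n" "v \<noteq> 0\<^sub>v n" "M *\<^sub>v v = z \<cdot>\<^sub>v v"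
    using assms(3) M unfolding eigenvalue_def eigenvector_def by auto
  define u where "u j = v $ j / complex_of_real (d j)" for j
  have vu: "v $ j = of_real (d j) * u j" if "j < n" for j
    using d[OF that] by (simp add: u_def)
  obtain j0 where j0: "j0 < n" "v $ j0 \<noteq> 0"
    using v(1,2) by (metis carrier_vecD eq_vecI index_zero_vec(1,2))
  define m where "m = Max ((\<lambda>j. cmod (u j)) ` {..<n})"
  have "m \<in> (\<lambda>j. cmod (u j)) ` {..<n}"
    unfolding m_def using j0 by (intro Max_in) auto
  then obtain i where i: "i < n" and ui: "cmod (u i) = m"
    by auto
  have umax: "cmod (u j) \<le> cmod (u i)" if "j < n" for j
    unfolding ui m_def using that by (intro Max_ge) auto
  have "cmod (u j0) > 0"
    using j0 d[OF j0(1)] by (simp add: u_def)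
  then have ui_pos: "cmod (u i) > 0"
    using umax[OF j0(1)] by linarith
  have "z * v $ i = (M *\<^sub>v v) $ i"
    using v(1,3) i by simp
  also have "\<dots> = (\<Sum>j<n. M $$ (i, j) * v $ j)"
    using M v(1) i by (simp add: scalar_prod_def lessThan_atLeast0)
  also have "\<dots> = M $$ (i, i) * v $ i + (\<Sum>j\<in>{..<n} - {i}. M $$ (i, j) * v $ j)"
    using i by (simp add: sum.remove)
  finally have balance: "(z - M $$ (i, i)) * of_real (d i) * u i
      = (\<Sum>j\<in>{..<n} - {i}. M $$ (i, j) * of_real (d j) * u j)"
    using i vu by (simp add: algebra_simps)
  have "cmod (z - M $$ (i, i)) * d i * cmod (u i) = cmod ((z - M $$ (i, i)) * of_real (d i) * u i)"
    using d[OF i] by (simp add: norm_mult)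
  also have "\<dots> \<le> (\<Sum>j\<in>{..<n} - {i}. cmod (M $$ (i, j) * of_real (d j) * u j))"
    unfolding balance by (rule norm_sum)
  also have "\<dots> \<le> (\<Sum>j\<in>{..<n} - {i}. cmod (M $$ (i, j)) * d j * cmod (u i))"
  proof (rule sum_mono)
    fix j assume "j \<in> {..<n} - {i}"
    then have "d j > 0" and "cmod (u j) \<le> cmod (u i)"
      using d umax by auto
    then show "cmod (M $$ (i, j) * of_real (d j) * u j) \<le> cmod (M $$ (i, j)) * d j * cmod (u i)"
      by (simp add: norm_mult mult_left_mono)
  qed
  also have "\<dots> = (\<Sum>j\<in>{..<n} - {i}. cmod (M $$ (i, j)) * d j) * cmod (u i)"
    by (simp add: sum_distrib_right)
  finally show ?thesis
    using that[OF i] ui_pos by simp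
qed

lemma eigenvalue_Re_neg_if_weighted_diagonally_dominant:
  fixes M :: "complex mat" and d :: "nat \<Rightarrow> real"
  assumes M: "M \<in> carrier_mat n n"
    and d: "\<And>i. i < n \<Longrightarrow> d i > 0"
    and dominant: "\<And>i. i < n \<Longrightarrow>
      Re (M $$ (i, i)) * d i + (\<Sum>j\<in>{..<n} - {i}. cmod (M $$ (i, j)) * d j) < 0"
    and "eigenvalue M z"
  shows "Re z < 0"
proof -
  obtain i where i: "i < n"
    and disc: "cmod (z - M $$ (i, i)) * d i \<le> (\<Sum>j\<in>{..<n} - {i}. cmod (M $$ (i, j)) * d j)"
    using eigenvalue_weighted_gershgorin[where d = d, OF M d \<open>eigenvalue M z\<close>] by blast
  have "Re z * d i = Re (M $$ (i, i)) * d i + Re (z - M $$ (i, i)) * d i"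
    by (simp add: algebra_simps)
  also have "\<dots> \<le> Re (M $$ (i, i)) * d i + cmod (z - M $$ (i, i)) * d i"
    using complex_Re_le_cmod[of "z - M $$ (i, i)"] d[OF i]
    by (intro add_left_mono mult_right_mono) auto
  also have "\<dots> < 0"
    using disc dominant[OF i] by linarith
  finally show ?thesis
    using d[OF i] by (simp add: mult_less_0_iff)
qed

lemma inv_matrix_weighted_row_sum:
  fixes n i :: nat and L \<mu> \<theta> :: "nat \<Rightarrow> real" and \<gamma> :: "nat \<Rightarrow> nat \<Rightarrow> real"
  defines "A \<equiv> map_mat complex_of_real (inv_matrix n L \<mu> \<theta> \<gamma>)"
  assumes L: "\<And>j. j < n \<Longrightarrow> L j > 0"
    and \<gamma>_nonneg: "\<And>j. j < n \<Longrightarrow> \<gamma> i j \<ge> 0"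
    and \<gamma>_diag: "\<gamma> i i = 0"
    and i: "i < n"
  shows "Re (A $$ (i, i)) * L i + (\<Sum>j\<in>{..<n} - {i}. cmod (A $$ (i, j)) * L j)
    = - (\<mu> i + \<theta> i * L i)"
proof -
  have off_diag: "cmod (A $$ (i, j)) * L j = \<gamma> i j" if "j \<in> {..<n} - {i}" for j
    using that i L[of j] \<gamma>_nonneg[of j] by (auto simp: A_def inv_matrix_def norm_divide)
  have "(\<Sum>k<n. \<gamma> i k) = (\<Sum>j\<in>{..<n} - {i}. \<gamma> i j)"
    using i \<gamma>_diag by (simp add: sum.remove)
  moreover have "Re (A $$ (i, i)) * L i = - (\<mu> i + \<theta> i * L i + (\<Sum>k<n. \<gamma> i k))"
    using i L[OF i]
    by (simp add: A_def inv_matrix_def sum_divide_distrib[symmetric] field_simps)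
  ultimately show ?thesis
    by (simp add: off_diag)
qed

theorem lemma1:
  fixes n :: nat and z :: complex and L \<mu> \<theta> :: "nat \<Rightarrow> real" and \<gamma> :: "nat \<Rightarrow> nat \<Rightarrow> real"
  assumes "n \<ge> 1"
    and "\<And>i. i < n \<Longrightarrow> L i > 0"
    and "\<And>i. i < n \<Longrightarrow> \<mu> i > 0"
    and "\<And>i. i < n \<Longrightarrow> \<theta> i \<ge> 0"
    and "\<And>i j. i < n \<Longrightarrow> j < n \<Longrightarrow> \<gamma> i j \<ge> 0"
    and "\<And>i. i < n \<Longrightarrow> \<gamma> i i = 0"
    and "\<And>i j. i < n \<Longrightarrow> j < n \<Longrightarrow> \<gamma> i j = \<gamma> j i"
    and "eigenvalue (map_mat complex_of_real (inv_matrix n L \<mu> \<theta> \<gamma>)) z"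
  shows "Re z < 0"
proof -
  let ?A = "map_mat complex_of_real (inv_matrix n L \<mu> \<theta> \<gamma>)"
  have dominant: "Re (?A $$ (i, i)) * L i + (\<Sum>j\<in>{..<n} - {i}. cmod (?A $$ (i, j)) * L j) < 0"
    if i: "i < n" for i
  proof -
    have "Re (?A $$ (i, i)) * L i + (\<Sum>j\<in>{..<n} - {i}. cmod (?A $$ (i, j)) * L j)
        = - (\<mu> i + \<theta> i * L i)"
      by (rule inv_matrix_weighted_row_sum) (use assms(2,5,6) i in auto)
    moreover have "\<theta> i * L i \<ge> 0"
      using assms(2,4)[OF i] by simp
    ultimately show ?thesis
      using assms(3)[OF i] by linarith
  qed
  show ?thesis
    by (rule eigenvalue_Re_neg_if_weighted_diagonally_dominant[OF _ assms(2) dominant assms(8)])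
      (simp add: inv_matrix_def)
qed

end
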